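(* Let $k>0$, $\theta>0$, and let $X_1,\dots,X_n$ be i.i.d. Gamma random variables with shape parameter $k$ and scale parameter $\theta$ (density $\frac{x^{k-1}}{\Gamma(k)\theta^k}e^{-x/\theta}$ for $x>0$). Let $$\Delta=\min\left\{\frac12,\ \Big(3+\frac6k\Big)^{3/4}\frac{C_{\mathrm{BE}}}{\sqrt n}\right\}.$$ Then $$\Pr\Big\{\frac1n\sum_{i=1}^nX_i\ge\rho k\theta\Big\}\le\Big(\frac12+\Delta\Big)\big[\rho\exp(1-\rho)\big]^{kn}\quad\text{for }\rho\ge1,$$ $$\Pr\Big\{\frac1n\sum_{i=1}^nX_i\le\rho k\theta\Big\}\le\Big(\frac12+\Delta\Big)\big[\rho\exp(1-\rho)\big]^{kn}\quad\text{for }0<\rho\le1.$$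
   Context: $C_{\mathrm{BE}}$ denotes the absolute constant in the Berry–Esseen inequality: for i.i.d. $Y_1,Y_2,\dots$ distributed as $Y$ with $\mathbb{E}[Y]=0$, $\mathbb{E}[Y^2]>0$, $\mathbb{E}[|Y|^3]<\infty$, the cdf $F_n$ of $\sum_{i=1}^nY_i/\sqrt{n\mathbb{E}[Y^2]}$ satisfies $|F_n(y)-\Phi(y)|\le\frac{C_{\mathrm{BE}}}{\sqrt n}\frac{\mathbb{E}[|Y|^3]}{\mathbb{E}^{3/2}[Y^2]}$ for all $y,n$, where $\Phi$ is the standard normal cdf. *)

theory Defs
  imports "HOL-Probability.Probability"
begin

definition gamma_density :: "real \<Rightarrow> real \<Rightarrow> real \<Rightarrow> real" where
  "gamma_density k \<theta> x =
     (if x > 0 then x powr (k - 1) / (Gamma k * \<theta> powr k) * exp (- x / \<theta>) else 0)"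

definition std_normal_cdf :: "real \<Rightarrow> real" where
  "std_normal_cdf y = measure (density lborel std_normal_density) {..y}"

definition berry_esseen_constant :: "real \<Rightarrow> bool" where
  "berry_esseen_constant C \<longleftrightarrow>
    (\<forall>\<mu> :: real measure.
       prob_space \<mu> \<and> sets \<mu> = sets borel \<and>
       integrable \<mu> (\<lambda>y. \<bar>y\<bar> ^ 3) \<and>
       (\<integral>y. y \<partial>\<mu>) = 0 \<and> (\<integral>y. y\<^sup>2 \<partial>\<mu>) > 0 \<longrightarrow>
       (\<forall>n::nat. n > 0 \<longrightarrow> (\<forall>y::real.
          \<bar>measure (PiM {..<n} (\<lambda>_. \<mu>))
              {\<omega> \<in> space (PiM {..<n} (\<lambda>_. \<mu>)).
                 (\<Sum>i<n. \<omega> i) / sqrt (real n * (\<integral>y. y\<^sup>2 \<partial>\<mu>)) \<le> y}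
           - std_normal_cdf y\<bar>
          \<le> C / sqrt (real n) * (\<integral>y. \<bar>y\<bar> ^ 3 \<partial>\<mu>) / (\<integral>y. y\<^sup>2 \<partial>\<mu>) powr (3/2))))"

end

theory Submission
  imports Defs
begin

text \<open>Exponential tilting: Gamma(k, \<theta>) has density \<open>\<rho> powr k * exp (- (\<rho> - 1) / (\<rho> * \<theta>) * x)\<close>
  with respect to Gamma(k, \<rho> * \<theta>). On the event that the sample sum lies beyond \<open>n * \<rho> * k * \<theta>\<close>
  (above it for \<open>\<rho> \<ge> 1\<close>, below it for \<open>\<rho> \<le> 1\<close>), the likelihood ratio of the n-fold products is
  at most \<open>(\<rho> * exp (1 - \<rho>)) powr (k * n)\<close>. What remains is the probability, under the tilted
  law, that the sum lies on one side of its own mean; Berry-Esseen at 0 bounds it by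
  \<open>1/2 + C * E\<bar>Y\<bar>^3 / ((E Y^2) powr (3/2) * sqrt n)\<close>, and the AM-GM (Cauchy-Schwarz) bound
  \<open>E\<bar>Y\<bar>^3 \<le> sqrt (E Y^2 * E Y^4)\<close> together with the Gamma central moments gives the factor
  \<open>sqrt (3 + 6/k) \<le> (3 + 6/k) powr (3/4)\<close>.\<close>

section \<open>Moments of the Gamma distribution\<close>

lemma nn_integral_Gamma_kernel:
  fixes a \<theta> :: real
  assumes a: "a > 0" and \<theta>: "\<theta> > 0"
  shows "(\<integral>\<^sup>+x. ennreal (if x > 0 then x powr (a - 1) * exp (- x / \<theta>) else 0) \<partial>lborel)
           = ennreal (\<theta> powr a * Gamma a)"
proof -
  let ?f = "\<lambda>x. ennreal (if x > 0 then x powr (a - 1) * exp (- x / \<theta>) else 0)"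
  let ?g = "\<lambda>x. ennreal (if x > 0 then x powr (a - 1) * exp (- x) else 0)"
  have "((\<lambda>t. t powr (a - 1) / exp t) has_integral Gamma a) {0..}"
    using Gamma_integral_real[OF a] .
  then have "((\<lambda>t. if t \<in> {0..} then t powr (a - 1) / exp t else 0) has_integral Gamma a) UNIV"
    by (subst has_integral_restrict_UNIV)
  also have "(\<lambda>t. if t \<in> {0..} then t powr (a - 1) / exp t else 0)
               = (\<lambda>x. if x > 0 then x powr (a - 1) * exp (- x) else 0)"
    by (auto simp: fun_eq_iff exp_minus field_simps)
  finally have "((\<lambda>x. if x > 0 then x powr (a - 1) * exp (- x) else 0) has_integral Gamma a) UNIV" .
  then have unit: "(\<integral>\<^sup>+x. ?g x \<partial>lborel) = ennreal (Gamma a)"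
    by (rule nn_integral_has_integral_lborel[rotated 2]) auto
  have "(\<integral>\<^sup>+x. ?f x \<partial>lborel) = \<bar>\<theta>\<bar> * (\<integral>\<^sup>+x. ?f (0 + \<theta> * x) \<partial>lborel)"
    by (rule nn_integral_real_affine) (use \<theta> in auto)
  also have "(\<lambda>x. ?f (0 + \<theta> * x)) = (\<lambda>x. ennreal (\<theta> powr (a - 1)) * ?g x)"
    using \<theta> by (auto simp: fun_eq_iff powr_mult zero_less_mult_iff ennreal_mult'[symmetric])
  also have "(\<integral>\<^sup>+x. ennreal (\<theta> powr (a - 1)) * ?g x \<partial>lborel) = ennreal (\<theta> powr (a - 1)) * ennreal (Gamma a)"
    by (subst nn_integral_cmult) (auto simp: unit)
  also have "\<bar>\<theta>\<bar> * (ennreal (\<theta> powr (a - 1)) * ennreal (Gamma a)) = ennreal (\<theta> powr a * Gamma a)"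
    using \<theta> a by (simp add: ennreal_mult'[symmetric] powr_diff Gamma_real_pos less_imp_le)
  finally show ?thesis .
qed

lemma gamma_density_nonneg: "k > 0 \<Longrightarrow> \<theta> > 0 \<Longrightarrow> gamma_density k \<theta> x \<ge> 0"
  by (auto simp: gamma_density_def Gamma_real_pos)

lemma gamma_density_measurable [measurable]: "gamma_density k \<theta> \<in> borel_measurable borel"
  unfolding gamma_density_def by measurable

lemma nn_integral_gamma_moment:
  fixes k \<theta> :: real and j :: nat
  assumes k: "k > 0" and \<theta>: "\<theta> > 0"
  shows "(\<integral>\<^sup>+x. ennreal (gamma_density k \<theta> x * x ^ j) \<partial>lborel) = ennreal (\<theta> ^ j * pochhammer k j)"
proof -
  have Gk: "Gamma k > 0" using Gamma_real_pos[OF k] .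
  have "(\<lambda>x. ennreal (gamma_density k \<theta> x * x ^ j)) = (\<lambda>x. ennreal (1 / (Gamma k * \<theta> powr k)) *
     ennreal (if x > 0 then x powr ((k + j) - 1) * exp (- x / \<theta>) else 0))"
    using k \<theta> Gk by (auto simp: fun_eq_iff gamma_density_def ennreal_mult'[symmetric]
        powr_add powr_diff powr_realpow field_simps)
  then have "(\<integral>\<^sup>+x. ennreal (gamma_density k \<theta> x * x ^ j) \<partial>lborel)
      = ennreal (1 / (Gamma k * \<theta> powr k)) * ennreal (\<theta> powr (k + j) * Gamma (k + j))"
    using k \<theta> by (simp add: nn_integral_cmult nn_integral_Gamma_kernel)
  also have "\<dots> = ennreal (\<theta> ^ j * pochhammer k j)"
    using k \<theta> Gk pochhammer_Gamma[of k j]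
    by (simp add: ennreal_mult'[symmetric] powr_add powr_realpow field_simps nonpos_Ints_def)
  finally show ?thesis .
qed

lemma has_bochner_integral_gamma_moment:
  fixes k \<theta> :: real and j :: nat
  assumes k: "k > 0" and \<theta>: "\<theta> > 0"
  shows "has_bochner_integral (density lborel (gamma_density k \<theta>)) (\<lambda>x. x ^ j) (\<theta> ^ j * pochhammer k j)"
proof -
  have "has_bochner_integral lborel (\<lambda>x. gamma_density k \<theta> x * x ^ j) (\<theta> ^ j * pochhammer k j)"
    using k \<theta> nn_integral_gamma_moment[OF k \<theta>]
    by (intro has_bochner_integral_nn_integral) (auto simp: pochhammer_pos less_imp_le gamma_density_def)
  then show ?thesis
    using gamma_density_nonneg[OF k \<theta>]
    by (simp add: has_bochner_integral_iff integrable_density integral_density)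
qed

lemma prob_space_gamma: "k > 0 \<Longrightarrow> \<theta> > 0 \<Longrightarrow> prob_space (density lborel (gamma_density k \<theta>))"
  using nn_integral_gamma_moment[of k \<theta> 0] by (intro prob_spaceI) (simp add: emeasure_density)

lemma has_bochner_integral_centered_gamma_moments:
  fixes k \<theta> \<sigma> :: real
  assumes k: "k > 0" and \<theta>: "\<theta> > 0" and \<sigma>: "\<bar>\<sigma>\<bar> = 1"
  defines "\<mu> \<equiv> distr (density lborel (gamma_density k \<theta>)) borel (\<lambda>x. \<sigma> * (x - k * \<theta>))"
  shows "has_bochner_integral \<mu> (\<lambda>y. y) 0"
    and "has_bochner_integral \<mu> (\<lambda>y. y\<^sup>2) (k * \<theta>\<^sup>2)"
    and "has_bochner_integral \<mu> (\<lambda>y. y ^ 4) ((3 * k\<^sup>2 + 6 * k) * \<theta> ^ 4)"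
proof -
  let ?D = "density lborel (gamma_density k \<theta>)"
  let ?m = "k * \<theta>"
  note M = has_bochner_integral_gamma_moment[OF k \<theta>]
  have "\<sigma> = 1 \<or> \<sigma> = -1" using \<sigma> by linarith
  then have even_powers: "(\<sigma> * a)\<^sup>2 = a\<^sup>2" "(\<sigma> * a) ^ 4 = a ^ 4" for a :: real
    by auto
  have pushforward: "has_bochner_integral \<mu> g c"
    if "g \<in> borel_measurable borel" "has_bochner_integral ?D (\<lambda>x. g (\<sigma> * (x - ?m))) c"
    for g :: "real \<Rightarrow> real" and c
    unfolding \<mu>_def using that by (intro has_bochner_integral_distr) simp_all
  have "has_bochner_integral ?D (\<lambda>x. \<sigma> * (x ^ 1 - ?m * x ^ 0)) (\<sigma> * (\<theta> ^ 1 * pochhammer k 1 - ?m * (\<theta> ^ 0 * pochhammer k 0)))"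
    by (intro has_bochner_integral_mult_right has_bochner_integral_diff M)
  then show "has_bochner_integral \<mu> (\<lambda>y. y) 0"
    by (intro pushforward) simp_all
  have "has_bochner_integral ?D (\<lambda>x. x ^ 2 - 2 * ?m * x ^ 1 + ?m\<^sup>2 * x ^ 0)
     (\<theta> ^ 2 * pochhammer k 2 - 2 * ?m * (\<theta> ^ 1 * pochhammer k 1) + ?m\<^sup>2 * (\<theta> ^ 0 * pochhammer k 0))"
    by (intro has_bochner_integral_diff has_bochner_integral_add has_bochner_integral_mult_right M)
  then show "has_bochner_integral \<mu> (\<lambda>y. y\<^sup>2) (k * \<theta>\<^sup>2)"
    by (intro pushforward) (simp, unfold even_powers, simp add: pochhammer_Suc numeral_eq_Suc power2_eq_square algebra_simps)
  have "has_bochner_integral ?D (\<lambda>x. x ^ 4 - 4 * ?m * x ^ 3 + 6 * ?m\<^sup>2 * x ^ 2 - 4 * ?m ^ 3 * x ^ 1 + ?m ^ 4 * x ^ 0)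
     (\<theta> ^ 4 * pochhammer k 4 - 4 * ?m * (\<theta> ^ 3 * pochhammer k 3) + 6 * ?m\<^sup>2 * (\<theta> ^ 2 * pochhammer k 2)
      - 4 * ?m ^ 3 * (\<theta> ^ 1 * pochhammer k 1) + ?m ^ 4 * (\<theta> ^ 0 * pochhammer k 0))"
    by (intro has_bochner_integral_diff has_bochner_integral_add has_bochner_integral_mult_right M)
  then show "has_bochner_integral \<mu> (\<lambda>y. y ^ 4) ((3 * k\<^sup>2 + 6 * k) * \<theta> ^ 4)"
    by (intro pushforward) (simp, unfold even_powers, simp add: pochhammer_Suc numeral_eq_Suc power2_eq_square algebra_simps)
qed

section \<open>The Berry-Esseen bound at zero\<close>

lemma std_normal_cdf_0: "std_normal_cdf 0 = 1/2"
proof -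
  let ?N = "density lborel std_normal_density"
  interpret N: prob_space ?N using prob_space_normal_density by simp
  have "emeasure ?N {..0} = (\<integral>\<^sup>+x. ennreal (std_normal_density x) * indicator {..0} x \<partial>lborel)"
    by (simp add: emeasure_density)
  also have "\<dots> = ennreal \<bar>-1::real\<bar> *
      (\<integral>\<^sup>+x. ennreal (std_normal_density (0 + -1 * x)) * indicator {..0} (0 + -1 * x) \<partial>lborel)"
    by (rule nn_integral_real_affine) auto
  also have "\<dots> = (\<integral>\<^sup>+x. ennreal (std_normal_density x) * indicator {0..} x \<partial>lborel)"
    by (auto intro!: nn_integral_cong simp: std_normal_density_def indicator_def)
  also have "\<dots> = emeasure ?N {0..}"
    by (simp add: emeasure_density)
  finally have symmetric: "measure ?N {..0} = measure ?N {0..}"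
    by (simp add: measure_def)
  have "emeasure ?N {0} = (\<integral>\<^sup>+x. ennreal (std_normal_density x) * indicator {0} x \<partial>lborel)"
    by (simp add: emeasure_density)
  also have "\<dots> = (\<integral>\<^sup>+x. 0 \<partial>(lborel::real measure))"
    by (rule nn_integral_cong_AE, rule AE_mp[OF AE_lborel_singleton[of 0]]) (auto simp: indicator_def)
  finally have null: "measure ?N {0} = 0"
    by (simp add: measure_def)
  have "measure ?N ({..0} \<union> {0..}) = measure ?N {..0} + measure ?N {0..} - measure ?N ({..0} \<inter> {0..})"
    by (rule measure_Un3) (auto simp: N.fmeasurable_eq_sets)
  moreover have "{..0} \<union> {0..} = space ?N" "{..0} \<inter> {0..} = {0::real}"
    by auto
  ultimately have "1 = 2 * measure ?N {..0}"
    using symmetric null N.prob_space by simp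
  then show ?thesis
    unfolding std_normal_cdf_def by simp
qed

lemma abs_cube_le_square_plus_fourth: "\<bar>z\<bar> ^ 3 \<le> z\<^sup>2 + z ^ 4" for z :: real
proof (cases "\<bar>z\<bar> \<le> 1")
  case True
  then have "\<bar>z\<bar> ^ 3 \<le> \<bar>z\<bar> ^ 2" by (intro power_decreasing) auto
  then show ?thesis by (simp add: add_increasing2)
next
  case False
  then have "\<bar>z\<bar> ^ 3 \<le> \<bar>z\<bar> ^ 4" by (intro power_increasing) auto
  then show ?thesis by (simp add: add_increasing)
qed

lemma abs_cube_le_arith_mean: "t > 0 \<Longrightarrow> \<bar>z\<bar> ^ 3 \<le> (t * z\<^sup>2 + z ^ 4 / t) / 2" for z t :: real
proof -
  assume t: "t > 0"
  have "0 \<le> (t * \<bar>z\<bar> - z\<^sup>2)\<^sup>2 / t" using t by simp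
  also have "(t * \<bar>z\<bar> - z\<^sup>2)\<^sup>2 / t = t * z\<^sup>2 - 2 * \<bar>z\<bar> ^ 3 + z ^ 4 / t"
    using t by (simp add: field_simps power2_eq_square power3_eq_cube power4_eq_xxxx)
  finally show ?thesis by simp
qed

lemma integrable_abs_cube:
  fixes f :: "'a \<Rightarrow> real"
  assumes "f \<in> borel_measurable M" "integrable M (\<lambda>x. (f x)\<^sup>2)" "integrable M (\<lambda>x. f x ^ 4)"
  shows "integrable M (\<lambda>x. \<bar>f x\<bar> ^ 3)"
  using assms abs_cube_le_square_plus_fourth
  by (intro Bochner_Integration.integrable_bound[OF Bochner_Integration.integrable_add[OF assms(2,3)]]) auto

lemma integral_abs_cube_le:
  fixes f :: "'a \<Rightarrow> real"
  assumes f: "f \<in> borel_measurable M" "integrable M (\<lambda>x. (f x)\<^sup>2)" "integrable M (\<lambda>x. f x ^ 4)"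
    and pos: "(\<integral>x. (f x)\<^sup>2 \<partial>M) > 0" "(\<integral>x. f x ^ 4 \<partial>M) > 0"
  shows "(\<integral>x. \<bar>f x\<bar> ^ 3 \<partial>M) \<le> sqrt ((\<integral>x. (f x)\<^sup>2 \<partial>M) * (\<integral>x. f x ^ 4 \<partial>M))"
proof -
  define m2 where "m2 = (\<integral>x. (f x)\<^sup>2 \<partial>M)"
  define m4 where "m4 = (\<integral>x. f x ^ 4 \<partial>M)"
  define t where "t = sqrt (m4 / m2)"
  have t: "t > 0" using pos by (simp add: t_def m2_def m4_def)
  have "(\<integral>x. \<bar>f x\<bar> ^ 3 \<partial>M) \<le> (\<integral>x. (t * (f x)\<^sup>2 + f x ^ 4 / t) / 2 \<partial>M)"
    using f integrable_abs_cube[OF f] abs_cube_le_arith_mean[OF t] by (intro integral_mono) auto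
  also have "\<dots> = (t * m2 + m4 / t) / 2"
    using f by (simp add: m2_def m4_def)
  also have "\<dots> = sqrt (m2 * m4)"
    using pos by (simp add: t_def m2_def m4_def real_sqrt_divide real_sqrt_mult field_simps)
  finally show ?thesis by (simp add: m2_def m4_def)
qed

lemma berry_esseen_at_zero:
  fixes \<mu> :: "real measure" and n :: nat
  assumes BE: "berry_esseen_constant C"
    and \<mu>: "prob_space \<mu>" "sets \<mu> = sets borel" "integrable \<mu> (\<lambda>y. \<bar>y\<bar> ^ 3)"
    and mean: "(\<integral>y. y \<partial>\<mu>) = 0" and var: "(\<integral>y. y\<^sup>2 \<partial>\<mu>) > 0" and n: "n > 0"
  shows "\<bar>measure (PiM {..<n} (\<lambda>_. \<mu>)) {\<omega> \<in> space (PiM {..<n} (\<lambda>_. \<mu>)). (\<Sum>i<n. \<omega> i) \<le> 0} - 1/2\<bar>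
           \<le> C / sqrt (real n) * ((\<integral>y. \<bar>y\<bar> ^ 3 \<partial>\<mu>) / (\<integral>y. y\<^sup>2 \<partial>\<mu>) powr (3/2))"
proof -
  have "{\<omega> \<in> space (PiM {..<n} (\<lambda>_. \<mu>)). (\<Sum>i<n. \<omega> i) / sqrt (real n * (\<integral>y. y\<^sup>2 \<partial>\<mu>)) \<le> 0}
      = {\<omega> \<in> space (PiM {..<n} (\<lambda>_. \<mu>)). (\<Sum>i<n. \<omega> i) \<le> 0}"
    using mult_pos_pos[OF _ var, of "real n"] n by (auto simp: divide_le_0_iff)
  moreover have "\<bar>measure (PiM {..<n} (\<lambda>_. \<mu>))
      {\<omega> \<in> space (PiM {..<n} (\<lambda>_. \<mu>)). (\<Sum>i<n. \<omega> i) / sqrt (real n * (\<integral>y. y\<^sup>2 \<partial>\<mu>)) \<le> 0}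
        - std_normal_cdf 0\<bar>
      \<le> C / sqrt (real n) * (\<integral>y. \<bar>y\<bar> ^ 3 \<partial>\<mu>) / (\<integral>y. y\<^sup>2 \<partial>\<mu>) powr (3/2)"
    using BE \<mu> mean var n unfolding berry_esseen_constant_def by blast
  ultimately show ?thesis
    by (simp add: std_normal_cdf_0)
qed

lemma berry_esseen_constant_nonneg:
  fixes \<mu> :: "real measure"
  assumes BE: "berry_esseen_constant C"
    and \<mu>: "prob_space \<mu>" "sets \<mu> = sets borel" "integrable \<mu> (\<lambda>y. \<bar>y\<bar> ^ 3)"
    and mean: "(\<integral>y. y \<partial>\<mu>) = 0" and var: "(\<integral>y. y\<^sup>2 \<partial>\<mu>) > 0"
  shows "C \<ge> 0"
proof -
  have "(\<integral>y. \<bar>y\<bar> ^ 3 \<partial>\<mu>) \<noteq> 0"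
  proof
    assume "(\<integral>y. \<bar>y\<bar> ^ 3 \<partial>\<mu>) = 0"
    then have "AE y in \<mu>. y\<^sup>2 = 0"
      using \<mu> by (subst (asm) integral_nonneg_eq_0_iff_AE) (auto elim: AE_mp)
    then have "(\<integral>y. y\<^sup>2 \<partial>\<mu>) = 0"
      by (simp add: integral_eq_zero_AE)
    with var show False by simp
  qed
  then have ratio: "(\<integral>y. \<bar>y\<bar> ^ 3 \<partial>\<mu>) / (\<integral>y. y\<^sup>2 \<partial>\<mu>) powr (3/2) > 0"
    using var by (simp add: order.not_eq_order_implies_strict)
  have "0 \<le> C / sqrt (real 1) * ((\<integral>y. \<bar>y\<bar> ^ 3 \<partial>\<mu>) / (\<integral>y. y\<^sup>2 \<partial>\<mu>) powr (3/2))"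
    using order_trans[OF abs_ge_zero berry_esseen_at_zero[OF BE \<mu> mean var zero_less_one]] .
  then show ?thesis
    using ratio by (simp add: zero_le_mult_iff times_divide_eq_right[symmetric] del: times_divide_eq_right)
qed

lemma centered_gamma_berry_esseen:
  fixes k \<theta> \<sigma> C :: real and n :: nat
  assumes BE: "berry_esseen_constant C" and k: "k > 0" and \<theta>: "\<theta> > 0" and \<sigma>: "\<bar>\<sigma>\<bar> = 1" and n: "n > 0"
  defines "\<mu> \<equiv> distr (density lborel (gamma_density k \<theta>)) borel (\<lambda>x. \<sigma> * (x - k * \<theta>))"
  shows "measure (PiM {..<n} (\<lambda>_. \<mu>)) {\<omega> \<in> space (PiM {..<n} (\<lambda>_. \<mu>)). (\<Sum>i<n. \<omega> i) \<le> 0}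
           \<le> 1/2 + (3 + 6 / k) powr (3/4) * C / sqrt (real n)"
proof -
  define v where "v = k * \<theta>\<^sup>2"
  have v: "v > 0" using k \<theta> by (simp add: v_def)
  have fourth_pos: "(3 * k\<^sup>2 + 6 * k) * \<theta> ^ 4 > 0" using k \<theta> by (intro mult_pos_pos add_pos_pos) auto
  note moments = has_bochner_integral_centered_gamma_moments[OF k \<theta> \<sigma>, folded \<mu>_def]
  have \<mu>: "prob_space \<mu>" "sets \<mu> = sets borel"
    unfolding \<mu>_def using prob_space_gamma[OF k \<theta>] by (auto intro: prob_space.prob_space_distr)
  have mean: "(\<integral>y. y \<partial>\<mu>) = 0" and var: "(\<integral>y. y\<^sup>2 \<partial>\<mu>) = v"
    and fourth: "(\<integral>y. y ^ 4 \<partial>\<mu>) = (3 * k\<^sup>2 + 6 * k) * \<theta> ^ 4"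
    using moments by (simp_all add: has_bochner_integral_integral_eq v_def)
  have int: "integrable \<mu> (\<lambda>y. y\<^sup>2)" "integrable \<mu> (\<lambda>y. y ^ 4)"
    using moments(2,3) by (auto intro: integrable.intros)
  have int3: "integrable \<mu> (\<lambda>y. \<bar>y\<bar> ^ 3)"
    using integrable_abs_cube[of "\<lambda>y. y", OF _ int] \<mu> by simp
  have C: "C \<ge> 0"
    using berry_esseen_constant_nonneg[OF BE \<mu> int3 mean] var v by simp
  have "(\<integral>y. \<bar>y\<bar> ^ 3 \<partial>\<mu>) \<le> sqrt (v * ((3 * k\<^sup>2 + 6 * k) * \<theta> ^ 4))"
    using integral_abs_cube_le[of "\<lambda>y. y", OF _ int] \<mu> var fourth v fourth_pos by simp
  also have "v * ((3 * k\<^sup>2 + 6 * k) * \<theta> ^ 4) = (3 + 6 / k) * v ^ 3"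
    using k by (simp add: v_def field_simps power2_eq_square power3_eq_cube power4_eq_xxxx)
  also have "sqrt ((3 + 6 / k) * v ^ 3) = sqrt (3 + 6 / k) * v powr (3/2)"
  proof -
    have "sqrt (v ^ 3) = (v powr 3) powr (1/2)"
      using v by (simp add: powr_half_sqrt powr_realpow)
    then show ?thesis
      by (simp add: real_sqrt_mult powr_powr)
  qed
  also have "sqrt (3 + 6 / k) \<le> (3 + 6 / k) powr (3/4)"
    using k by (simp add: powr_half_sqrt[symmetric] powr_mono)
  finally have ratio: "(\<integral>y. \<bar>y\<bar> ^ 3 \<partial>\<mu>) / v powr (3/2) \<le> (3 + 6 / k) powr (3/4)"
    using v by (simp add: divide_le_eq)
  have "measure (PiM {..<n} (\<lambda>_. \<mu>)) {\<omega> \<in> space (PiM {..<n} (\<lambda>_. \<mu>)). (\<Sum>i<n. \<omega> i) \<le> 0}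
           \<le> 1/2 + C / sqrt (real n) * ((\<integral>y. \<bar>y\<bar> ^ 3 \<partial>\<mu>) / v powr (3/2))"
    using berry_esseen_at_zero[OF BE \<mu> int3 mean _ n] var v by simp
  also have "\<dots> \<le> 1/2 + C / sqrt (real n) * (3 + 6 / k) powr (3/4)"
    using C ratio by (intro add_left_mono mult_left_mono) auto
  finally show ?thesis by (simp add: mult.commute)
qed

section \<open>Exponential tilting of Gamma products\<close>

lemma PiM_density:
  fixes N :: "'b measure" and h :: "'b \<Rightarrow> ennreal" and I :: "'i set"
  assumes I: "finite I" and N: "prob_space N" and Nh: "prob_space (density N h)"
    and h[measurable]: "h \<in> borel_measurable N"
  shows "PiM I (\<lambda>_. density N h) = density (PiM I (\<lambda>_. N)) (\<lambda>x. \<Prod>i\<in>I. h (x i))"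
proof -
  interpret Nh: product_sigma_finite "\<lambda>_. density N h"
    unfolding product_sigma_finite_def using prob_space_imp_sigma_finite[OF Nh] by blast
  interpret N: product_sigma_finite "\<lambda>_. N"
    unfolding product_sigma_finite_def using prob_space_imp_sigma_finite[OF N] by blast
  show ?thesis
  proof (rule Nh.PiM_eqI[symmetric, OF I])
    show "sets (density (Pi\<^sub>M I (\<lambda>_. N)) (\<lambda>x. \<Prod>i\<in>I. h (x i))) = sets (Pi\<^sub>M I (\<lambda>_. density N h))"
      by (auto intro!: sets_PiM_cong)
    fix A assume "\<And>i. i \<in> I \<Longrightarrow> A i \<in> sets (density N h)"
    then have A: "\<And>i. i \<in> I \<Longrightarrow> A i \<in> sets N" by simp
    have "emeasure (density (Pi\<^sub>M I (\<lambda>_. N)) (\<lambda>x. \<Prod>i\<in>I. h (x i))) (Pi\<^sub>E I A)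
        = (\<integral>\<^sup>+x. (\<Prod>i\<in>I. h (x i)) * indicator (Pi\<^sub>E I A) x \<partial>Pi\<^sub>M I (\<lambda>_. N))"
      using A I by (subst emeasure_density) (auto intro!: sets_PiM_I_finite)
    also have "\<dots> = (\<integral>\<^sup>+x. (\<Prod>i\<in>I. h (x i) * indicator (A i) (x i)) \<partial>Pi\<^sub>M I (\<lambda>_. N))"
    proof (intro nn_integral_cong)
      fix x assume "x \<in> space (Pi\<^sub>M I (\<lambda>_. N))"
      then have "indicator (Pi\<^sub>E I A) x = (\<Prod>i\<in>I. indicator (A i) (x i) :: ennreal)"
        using I by (auto simp: indicator_def space_PiM PiE_def extensional_def intro!: prod.neutral)
      then show "(\<Prod>i\<in>I. h (x i)) * indicator (Pi\<^sub>E I A) x = (\<Prod>i\<in>I. h (x i) * indicator (A i) (x i))"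
        by (simp add: prod.distrib)
    qed
    also have "\<dots> = (\<Prod>i\<in>I. \<integral>\<^sup>+y. h y * indicator (A i) y \<partial>N)"
      using A by (subst N.product_nn_integral_prod[OF I]) auto
    also have "\<dots> = (\<Prod>i\<in>I. emeasure (density N h) (A i))"
      using A by (intro prod.cong refl) (simp add: emeasure_density)
    finally show "emeasure (density (Pi\<^sub>M I (\<lambda>_. N)) (\<lambda>x. \<Prod>i\<in>I. h (x i))) (Pi\<^sub>E I A)
       = (\<Prod>i\<in>I. emeasure (density N h) (A i))" .
  qed
qed

lemma emeasure_PiM_density_le:
  fixes N :: "'b measure" and h :: "'b \<Rightarrow> ennreal" and I :: "'i set"
  assumes I: "finite I" and N: "prob_space N" and Nh: "prob_space (density N h)"
    and h[measurable]: "h \<in> borel_measurable N"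
    and E: "E \<in> sets (PiM I (\<lambda>_. N))" and bound: "\<And>x. x \<in> E \<Longrightarrow> (\<Prod>i\<in>I. h (x i)) \<le> c"
  shows "emeasure (PiM I (\<lambda>_. density N h)) E \<le> c * emeasure (PiM I (\<lambda>_. N)) E"
proof -
  have "emeasure (PiM I (\<lambda>_. density N h)) E = (\<integral>\<^sup>+x. (\<Prod>i\<in>I. h (x i)) * indicator E x \<partial>PiM I (\<lambda>_. N))"
    using E by (simp add: PiM_density[OF I N Nh h] emeasure_density)
  also have "\<dots> \<le> (\<integral>\<^sup>+x. c * indicator E x \<partial>PiM I (\<lambda>_. N))"
    using bound by (intro nn_integral_mono) (auto simp: indicator_def)
  also have "\<dots> = c * emeasure (PiM I (\<lambda>_. N)) E"
    using E by (rule nn_integral_cmult_indicator)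
  finally show ?thesis .
qed

lemma density_gamma_tilt:
  fixes k \<theta> \<rho> :: real
  assumes k: "k > 0" and \<theta>: "\<theta> > 0" and \<rho>: "\<rho> > 0"
  shows "density lborel (gamma_density k \<theta>) =
    density (density lborel (gamma_density k (\<rho> * \<theta>))) (\<lambda>x. ennreal (\<rho> powr k * exp (- ((\<rho> - 1) / (\<rho> * \<theta>)) * x)))"
proof -
  have "gamma_density k (\<rho> * \<theta>) x * (\<rho> powr k * exp (- ((\<rho> - 1) / (\<rho> * \<theta>)) * x)) = gamma_density k \<theta> x"
    for x
  proof (cases "x > 0")
    case True
    have "exp (- x / (\<rho> * \<theta>)) * exp (- ((\<rho> - 1) / (\<rho> * \<theta>)) * x) = exp (- x / \<theta>)"
      using \<rho> \<theta> by (simp add: exp_add[symmetric] field_simps)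
    then show ?thesis
      using True \<rho> \<theta> k by (simp add: gamma_density_def powr_mult field_simps)
  qed (simp add: gamma_density_def)
  then have "density (density lborel (gamma_density k (\<rho> * \<theta>))) (\<lambda>x. ennreal (\<rho> powr k * exp (- ((\<rho> - 1) / (\<rho> * \<theta>)) * x)))
     = density lborel (\<lambda>x. ennreal (gamma_density k \<theta> x))"
    using gamma_density_nonneg[OF k, of "\<rho> * \<theta>"] \<rho> \<theta>
    by (subst density_density_eq) (auto simp: ennreal_mult'[symmetric])
  then show ?thesis ..
qed

lemma gamma_tilt_factor_le:
  fixes k \<theta> \<rho> S :: real and n :: nat
  assumes \<rho>: "\<rho> > 0" and \<theta>: "\<theta> > 0" and far_side: "0 \<le> (\<rho> - 1) * (S - n * (\<rho> * k * \<theta>))"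
  shows "\<rho> powr (k * n) * exp (- ((\<rho> - 1) / (\<rho> * \<theta>)) * S) \<le> (\<rho> * exp (1 - \<rho>)) powr (k * n)"
proof -
  have "(\<rho> - 1) / (\<rho> * \<theta>) * S - (\<rho> - 1) * (k * n) = (\<rho> - 1) * (S - n * (\<rho> * k * \<theta>)) / (\<rho> * \<theta>)"
    using \<rho> \<theta> by (simp add: field_simps)
  also have "\<dots> \<ge> 0" using far_side \<rho> \<theta> by simp
  finally have "exp (- ((\<rho> - 1) / (\<rho> * \<theta>)) * S) \<le> exp ((1 - \<rho>) * (k * n))"
    by (simp add: algebra_simps)
  then have "\<rho> powr (k * n) * exp (- ((\<rho> - 1) / (\<rho> * \<theta>)) * S) \<le> \<rho> powr (k * n) * exp ((1 - \<rho>) * (k * n))"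
    by (intro mult_left_mono) auto
  also have "\<dots> = (\<rho> * exp (1 - \<rho>)) powr (k * n)"
    using \<rho> by (simp add: powr_mult exp_powr_real)
  finally show ?thesis .
qed

lemma measure_PiM_gamma_le_tilted:
  fixes k \<theta> \<rho> :: real and I :: "'i set"
  assumes k: "k > 0" and \<theta>: "\<theta> > 0" and \<rho>: "\<rho> > 0" and I: "finite I"
    and E: "E \<in> sets (PiM I (\<lambda>_. borel))"
    and far_side: "\<And>x. x \<in> E \<Longrightarrow> 0 \<le> (\<rho> - 1) * ((\<Sum>i\<in>I. x i) - card I * (\<rho> * k * \<theta>))"
  shows "measure (PiM I (\<lambda>_. density lborel (gamma_density k \<theta>))) E
           \<le> (\<rho> * exp (1 - \<rho>)) powr (k * card I) * measure (PiM I (\<lambda>_. density lborel (gamma_density k (\<rho> * \<theta>)))) E"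
proof -
  let ?D = "density lborel (gamma_density k (\<rho> * \<theta>))"
  let ?h = "\<lambda>x. ennreal (\<rho> powr k * exp (- ((\<rho> - 1) / (\<rho> * \<theta>)) * x))"
  let ?c = "(\<rho> * exp (1 - \<rho>)) powr (k * card I)"
  have \<rho>\<theta>: "\<rho> * \<theta> > 0" using \<rho> \<theta> by simp
  interpret P: prob_space "PiM I (\<lambda>_. density lborel (gamma_density k \<theta>))"
    using prob_space_gamma[OF k \<theta>] by (intro prob_space_PiM)
  interpret Q: prob_space "PiM I (\<lambda>_. ?D)"
    using prob_space_gamma[OF k \<rho>\<theta>] by (intro prob_space_PiM)
  have tilt: "density lborel (gamma_density k \<theta>) = density ?D ?h"
    by (rule density_gamma_tilt[OF k \<theta> \<rho>])
  have "(\<Prod>i\<in>I. ?h (x i)) \<le> ennreal ?c" if "x \<in> E" for x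
  proof -
    have "(\<Prod>i\<in>I. \<rho> powr k * exp (- ((\<rho> - 1) / (\<rho> * \<theta>)) * x i))
        = \<rho> powr (k * card I) * exp (- ((\<rho> - 1) / (\<rho> * \<theta>)) * (\<Sum>i\<in>I. x i))"
      using \<rho> I by (simp add: prod.distrib exp_sum[symmetric] sum_distrib_left powr_realpow powr_powr[symmetric])
    also have "\<dots> \<le> ?c"
      using gamma_tilt_factor_le[OF \<rho> \<theta> far_side[OF that]] .
    finally show ?thesis
      by (simp add: prod_ennreal ennreal_leI)
  qed
  then have "emeasure (PiM I (\<lambda>_. density ?D ?h)) E \<le> ennreal ?c * emeasure (PiM I (\<lambda>_. ?D)) E"
    using E prob_space_gamma[OF k \<rho>\<theta>] prob_space_gamma[OF k \<theta>] tilt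
    by (intro emeasure_PiM_density_le[OF I]) (auto cong: sets_PiM_cong)
  then show ?thesis
    unfolding tilt[symmetric] P.emeasure_eq_measure Q.emeasure_eq_measure
    by (simp add: ennreal_mult'[symmetric] ennreal_le_iff)
qed

section \<open>Tail bounds for Gamma sample means\<close>

lemma measure_indep_vars_PiM:
  fixes X :: "'i \<Rightarrow> 'a \<Rightarrow> real"
  assumes M: "prob_space M" and I: "I \<noteq> {}"
    and indep: "prob_space.indep_vars M (\<lambda>_. borel) X I"
    and dist: "\<And>i. i \<in> I \<Longrightarrow> distributed M lborel (X i) f"
    and E: "E \<in> sets (PiM I (\<lambda>_. borel))"
  shows "measure M {\<omega> \<in> space M. (\<lambda>i\<in>I. X i \<omega>) \<in> E} = measure (PiM I (\<lambda>_. density lborel f)) E"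
proof -
  interpret prob_space M by (rule M)
  have X: "i \<in> I \<Longrightarrow> X i \<in> borel_measurable M" for i
    using dist by (simp add: distributed_def)
  have "distr M borel (X i) = density lborel f" if "i \<in> I" for i
  proof -
    have "distr M borel (X i) = distr M lborel (X i)" by (rule distr_cong) auto
    then show ?thesis using dist[OF that] by (simp add: distributed_def)
  qed
  then have "distr M (PiM I (\<lambda>_. borel)) (\<lambda>\<omega>. \<lambda>i\<in>I. X i \<omega>) = PiM I (\<lambda>_. density lborel f)"
    using indep I X by (subst (asm) indep_vars_iff_distr_eq_PiM') (auto intro: PiM_cong)
  moreover have "(\<lambda>\<omega>. \<lambda>i\<in>I. X i \<omega>) \<in> measurable M (PiM I (\<lambda>_. borel))"
    using X by (intro measurable_restrict) auto
  ultimately have "measure (PiM I (\<lambda>_. density lborel f)) E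
      = measure M ((\<lambda>\<omega>. \<lambda>i\<in>I. X i \<omega>) -` E \<inter> space M)"
    using E by (metis measure_distr)
  also have "(\<lambda>\<omega>. \<lambda>i\<in>I. X i \<omega>) -` E \<inter> space M = {\<omega> \<in> space M. (\<lambda>i\<in>I. X i \<omega>) \<in> E}"
    by blast
  finally show ?thesis ..
qed

lemma measure_PiM_sum_nonpos_distr:
  fixes D :: "'b measure" and f :: "'b \<Rightarrow> real" and I :: "'i set"
  assumes I: "finite I" and D: "prob_space D" and f[measurable]: "f \<in> borel_measurable D"
  shows "measure (PiM I (\<lambda>_. D)) {x \<in> space (PiM I (\<lambda>_. D)). (\<Sum>i\<in>I. f (x i)) \<le> 0}
       = measure (PiM I (\<lambda>_. distr D borel f)) {\<omega> \<in> space (PiM I (\<lambda>_. distr D borel f)). (\<Sum>i\<in>I. \<omega> i) \<le> 0}"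
    (is "_ = measure ?P ?F")
proof -
  have "measurable D (distr D borel f) = measurable D borel"
    by (rule measurable_cong_sets) simp_all
  then have f': "f \<in> measurable D (distr D borel f)"
    by simp
  have "distr D (distr D borel f) f = distr D borel f"
    by (rule distr_cong) auto
  then have P: "distr (PiM I (\<lambda>_. D)) ?P (compose I f) = ?P"
    using distr_PiM_finite_prob_space'[OF I, of "\<lambda>_. D" "\<lambda>_. distr D borel f" f] D f'
    by (simp add: prob_space.prob_space_distr)
  have F: "?F \<in> sets ?P"
  proof -
    have "sets ?P = sets (PiM I (\<lambda>_. borel))" by (intro sets_PiM_cong) auto
    moreover have "{\<omega> \<in> space (PiM I (\<lambda>_. borel)). (\<Sum>i\<in>I. \<omega> i) \<le> (0::real)} \<in> sets (PiM I (\<lambda>_. borel))"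
      by measurable
    ultimately show ?thesis by (simp cong: sets_eq_imp_space_eq)
  qed
  have "(\<lambda>x. f (x i)) \<in> measurable (PiM I (\<lambda>_. D)) (distr D borel f)" if "i \<in> I" for i
    using that f' by (intro measurable_compose[OF measurable_component_singleton])
  then have compose: "compose I f \<in> measurable (PiM I (\<lambda>_. D)) ?P"
    unfolding compose_def by (intro measurable_restrict) auto
  have "measure ?P ?F = measure (PiM I (\<lambda>_. D)) (compose I f -` ?F \<inter> space (PiM I (\<lambda>_. D)))"
    by (subst P[symmetric]) (rule measure_distr[OF compose F])
  also have "compose I f -` ?F \<inter> space (PiM I (\<lambda>_. D)) = {x \<in> space (PiM I (\<lambda>_. D)). (\<Sum>i\<in>I. f (x i)) \<le> 0}"
    using measurable_space[OF compose] by (auto simp: compose_def)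
  finally show ?thesis ..
qed

lemma measure_PiM_gamma_sum_le_berry_esseen:
  fixes k \<theta> \<sigma> C :: real and n :: nat
  assumes BE: "berry_esseen_constant C" and k: "k > 0" and \<theta>: "\<theta> > 0" and \<sigma>: "\<bar>\<sigma>\<bar> = 1" and n: "n > 0"
  shows "measure (PiM {..<n} (\<lambda>_. density lborel (gamma_density k \<theta>)))
            {x \<in> space (PiM {..<n} (\<lambda>_. borel)). \<sigma> * ((\<Sum>i<n. x i) - n * (k * \<theta>)) \<le> 0}
           \<le> 1/2 + (3 + 6 / k) powr (3/4) * C / sqrt (real n)"
proof -
  let ?D = "density lborel (gamma_density k \<theta>)"
  have "space (PiM {..<n} (\<lambda>_. ?D)) = space (PiM {..<n} (\<lambda>_. borel))"
    by (intro sets_eq_imp_space_eq sets_PiM_cong) auto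
  moreover have "\<sigma> * ((\<Sum>i<n. x i) - n * (k * \<theta>)) = (\<Sum>i<n. \<sigma> * (x i - k * \<theta>))" for x :: "nat \<Rightarrow> real"
    by (simp add: sum_distrib_left[symmetric] sum_subtractf algebra_simps)
  ultimately show ?thesis
    using measure_PiM_sum_nonpos_distr[of "{..<n}" ?D "\<lambda>x. \<sigma> * (x - k * \<theta>)"]
      centered_gamma_berry_esseen[OF BE k \<theta> \<sigma> n] prob_space_gamma[OF k \<theta>]
    by simp
qed

text \<open>\<open>\<sigma> = -1\<close> gives the upper tail (\<open>\<rho> \<ge> 1\<close>), \<open>\<sigma> = 1\<close> the lower tail (\<open>\<rho> \<le> 1\<close>).\<close>
lemma gamma_sample_sum_tail_le:
  fixes M :: "'a measure" and X :: "nat \<Rightarrow> 'a \<Rightarrow> real"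
    and k \<theta> C \<rho> \<sigma> :: real and n :: nat
  assumes M: "prob_space M" and BE: "berry_esseen_constant C"
    and k: "k > 0" and \<theta>: "\<theta> > 0" and n: "n \<ge> 1"
    and indep: "prob_space.indep_vars M (\<lambda>_. borel) X {..<n}"
    and dist: "\<And>i. i < n \<Longrightarrow> distributed M lborel (X i) (\<lambda>x. ennreal (gamma_density k \<theta> x))"
    and \<rho>: "\<rho> > 0" and \<sigma>: "\<bar>\<sigma>\<bar> = 1" and tail_side: "\<sigma> * (\<rho> - 1) \<le> 0"
  shows "measure M {\<omega> \<in> space M. \<sigma> * ((\<Sum>i<n. X i \<omega>) - n * (\<rho> * k * \<theta>)) \<le> 0}
     \<le> (1/2 + min (1/2) ((3 + 6 / k) powr (3/4) * C / sqrt (real n))) * (\<rho> * exp (1 - \<rho>)) powr (k * real n)"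
proof -
  define E where "E = {x \<in> space (PiM {..<n} (\<lambda>_. borel)). \<sigma> * ((\<Sum>i<n. x i) - n * (\<rho> * k * \<theta>)) \<le> 0}"
  let ?Q = "PiM {..<n} (\<lambda>_. density lborel (gamma_density k (\<rho> * \<theta>)))"
  have E_sets: "E \<in> sets (PiM {..<n} (\<lambda>_. borel))"
    unfolding E_def by measurable
  have "\<sigma> = 1 \<or> \<sigma> = -1" using \<sigma> by linarith
  then have far_side: "0 \<le> (\<rho> - 1) * ((\<Sum>i<n. x i) - card {..<n} * (\<rho> * k * \<theta>))" if "x \<in> E" for x
    using that tail_side unfolding E_def by (auto simp: mult_nonpos_nonpos)
  have Q_bound: "measure ?Q E \<le> 1/2 + min (1/2) ((3 + 6 / k) powr (3/4) * C / sqrt (real n))"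
  proof -
    have "\<rho> * \<theta> > 0" using \<rho> \<theta> by simp
    then have "measure ?Q E \<le> 1/2 + (3 + 6 / k) powr (3/4) * C / sqrt (real n)"
      using measure_PiM_gamma_sum_le_berry_esseen[OF BE k _ \<sigma>, of "\<rho> * \<theta>" n] n
      by (simp add: E_def ac_simps)
    moreover have "measure ?Q E \<le> 1"
      using prob_space_gamma[OF k \<open>\<rho> * \<theta> > 0\<close>] by (intro prob_space.prob_le_1 prob_space_PiM)
    ultimately show ?thesis by linarith
  qed
  have "{\<omega> \<in> space M. \<sigma> * ((\<Sum>i<n. X i \<omega>) - n * (\<rho> * k * \<theta>)) \<le> 0}
      = {\<omega> \<in> space M. (\<lambda>i\<in>{..<n}. X i \<omega>) \<in> E}"
    by (auto simp: E_def space_PiM)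
  then have "measure M {\<omega> \<in> space M. \<sigma> * ((\<Sum>i<n. X i \<omega>) - n * (\<rho> * k * \<theta>)) \<le> 0}
      = measure (PiM {..<n} (\<lambda>_. density lborel (gamma_density k \<theta>))) E"
    using measure_indep_vars_PiM[OF M _ indep dist E_sets] n by (simp add: lessThan_empty_iff)
  also have "\<dots> \<le> (\<rho> * exp (1 - \<rho>)) powr (k * real n) * measure ?Q E"
    using measure_PiM_gamma_le_tilted[OF k \<theta> \<rho> _ E_sets far_side] by simp
  also have "\<dots> \<le> (\<rho> * exp (1 - \<rho>)) powr (k * real n) * (1/2 + min (1/2) ((3 + 6 / k) powr (3/4) * C / sqrt (real n)))"
    using Q_bound by (intro mult_left_mono) auto
  finally show ?thesis
    by (simp add: mult.commute)
qed

theorem corollary8: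
  fixes M :: "'a measure" and X :: "nat \<Rightarrow> 'a \<Rightarrow> real"
    and k \<theta> C_BE :: real and n :: nat
  assumes "prob_space M"
    and "berry_esseen_constant C_BE"
    and "k > 0" and "\<theta> > 0" and "n \<ge> 1"
    and "prob_space.indep_vars M (\<lambda>_. borel) X {..<n}"
    and "\<And>i. i < n \<Longrightarrow> distributed M lborel (X i) (\<lambda>x. ennreal (gamma_density k \<theta> x))"
  defines "\<Delta> \<equiv> min (1/2) ((3 + 6 / k) powr (3/4) * C_BE / sqrt (real n))"
  shows "(\<forall>\<rho>. \<rho> \<ge> 1 \<longrightarrow>
           measure M {\<omega> \<in> space M. (\<Sum>i<n. X i \<omega>) / real n \<ge> \<rho> * k * \<theta>}
             \<le> (1/2 + \<Delta>) * (\<rho> * exp (1 - \<rho>)) powr (k * real n)) \<and>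
         (\<forall>\<rho>. 0 < \<rho> \<and> \<rho> \<le> 1 \<longrightarrow>
           measure M {\<omega> \<in> space M. (\<Sum>i<n. X i \<omega>) / real n \<le> \<rho> * k * \<theta>}
             \<le> (1/2 + \<Delta>) * (\<rho> * exp (1 - \<rho>)) powr (k * real n))"
proof (intro conjI allI impI)
  have n: "real n > 0" using assms(5) by simp
  fix \<rho> :: real
  assume "\<rho> \<ge> 1"
  moreover have "{\<omega> \<in> space M. (\<Sum>i<n. X i \<omega>) / real n \<ge> \<rho> * k * \<theta>}
      = {\<omega> \<in> space M. - 1 * ((\<Sum>i<n. X i \<omega>) - n * (\<rho> * k * \<theta>)) \<le> 0}"
    using n by (auto simp: pos_le_divide_eq algebra_simps)
  ultimately show "measure M {\<omega> \<in> space M. (\<Sum>i<n. X i \<omega>) / real n \<ge> \<rho> * k * \<theta>}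
      \<le> (1/2 + \<Delta>) * (\<rho> * exp (1 - \<rho>)) powr (k * real n)"
    using gamma_sample_sum_tail_le[OF assms(1-7), of \<rho> "- 1"] unfolding \<Delta>_def by simp
next
  have n: "real n > 0" using assms(5) by simp
  fix \<rho> :: real
  assume "0 < \<rho> \<and> \<rho> \<le> 1"
  moreover have "{\<omega> \<in> space M. (\<Sum>i<n. X i \<omega>) / real n \<le> \<rho> * k * \<theta>}
      = {\<omega> \<in> space M. 1 * ((\<Sum>i<n. X i \<omega>) - n * (\<rho> * k * \<theta>)) \<le> 0}"
    using n by (auto simp: pos_divide_le_eq algebra_simps)
  ultimately show "measure M {\<omega> \<in> space M. (\<Sum>i<n. X i \<omega>) / real n \<le> \<rho> * k * \<theta>}
      \<le> (1/2 + \<Delta>) * (\<rho> * exp (1 - \<rho>)) powr (k * real n)"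
    using gamma_sample_sum_tail_le[OF assms(1-7), of \<rho> 1] unfolding \<Delta>_def by simp
qed

end
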